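(* Let $T$ be a rooted tree and $v$ a vertex of $T$. A vertex $u$ is the level successor of $v$ if and only if $u$ is the first vertex appearing after the last occurrence of $v$ in the Euler tour of $T$ such that $\mathrm{level}(u)\ge \mathrm{level}(v)$.
   Context: The level of the root $r$ is $0$, and each other vertex has level one more than its parent. The level successor of $v$ is the next vertex after $v$ in preorder that lies on the same level as $v$. The Euler tour of $T$ is the sequence of $2n-1$ vertices (where $n$ is the number of vertices) obtained by traversing $T$ depth-first starting and ending at the root, each tree edge traversed once downward and once upward, listing the current vertex initially and after every step. *)

theory Defs
  imports Main
begin

text \<open>Rooted (ordered) trees; vertices are identified with their labels,
  which are assumed pairwise distinct in the theorem.\<close>
datatype 'a rtree = Node 'a "'a rtree list"

fun preorder :: "'a rtree \<Rightarrow> 'a list" where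
  "preorder (Node a ts) = a # concat (map preorder ts)"

fun euler_tour :: "'a rtree \<Rightarrow> 'a list" where
  "euler_tour (Node a ts) = a # concat (map (\<lambda>t. euler_tour t @ [a]) ts)"

fun levels_from :: "nat \<Rightarrow> 'a rtree \<Rightarrow> ('a \<times> nat) list" where
  "levels_from d (Node a ts) = (a, d) # concat (map (levels_from (Suc d)) ts)"

definition level :: "'a rtree \<Rightarrow> 'a \<Rightarrow> nat" where
  "level T v = (THE d. (v, d) \<in> set (levels_from 0 T))"

definition level_successor :: "'a rtree \<Rightarrow> 'a \<Rightarrow> 'a \<Rightarrow> bool" where
  "level_successor T v u \<longleftrightarrow>
     (let P = preorder T in
      \<exists>i j. i < j \<and> j < length P \<and> P ! i = v \<and> P ! j = u \<and>
            level T u = level T v \<and>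
            (\<forall>k. i < k \<and> k < j \<longrightarrow> level T (P ! k) \<noteq> level T v))"

definition last_occ :: "'a rtree \<Rightarrow> 'a \<Rightarrow> nat" where
  "last_occ T v = Max {i. i < length (euler_tour T) \<and> euler_tour T ! i = v}"

definition first_after_last_occ :: "'a rtree \<Rightarrow> 'a \<Rightarrow> 'a \<Rightarrow> bool" where
  "first_after_last_occ T v u \<longleftrightarrow>
     (let E = euler_tour T; p = last_occ T v in
      \<exists>q. p < q \<and> q < length E \<and> E ! q = u \<and> level T u \<ge> level T v \<and>
          (\<forall>k. p < k \<and> k < q \<longrightarrow> level T (E ! k) < level T v))"

end

theory Submission
  imports Defs
begin

text \<open>Label every vertex by its level, both in the preorder listing and in the Euler tour.
  After the last visit of v, the Euler tour returns to ancestors of v, which lie strictly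
  above v, and descends into the subtrees to the right of the path from the root to v,
  entering their vertices in preorder. Hence the first entry of level at least level v
  after the last visit of v is the first vertex after the subtree of v in preorder with
  level at least level v. Since the descendants of v lie strictly below v and levels
  increase by at most one along the preorder, that vertex has level exactly level v,
  i.e.\ it is the level successor of v.\<close>

fun euler_levels :: "nat \<Rightarrow> 'a rtree \<Rightarrow> ('a \<times> nat) list" where
  "euler_levels d (Node a ts) = (a, d) # concat (map (\<lambda>t. euler_levels (Suc d) t @ [(a, d)]) ts)"

lemma map_fst_levels_from: "map fst (levels_from d t) = preorder t"
  by (induction d t rule: levels_from.induct) (simp add: map_concat cong: map_cong)

lemma map_fst_euler_levels: "map fst (euler_levels d t) = euler_tour t"
  by (induction d t rule: euler_levels.induct) (simp add: map_concat cong: map_cong)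

lemma set_euler_levels_subset: "set (euler_levels d t) \<subseteq> set (levels_from d t)"
  by (induction d t rule: euler_levels.induct) auto

lemma set_euler_tour: "set (euler_tour t) = set (preorder t)"
  by (induction t rule: euler_tour.induct) auto

lemma fst_set_euler_levels: "fst ` set (euler_levels d t) = set (preorder t)"
  by (metis map_fst_euler_levels set_euler_tour set_map)

lemma levels_from_ge: "p \<in> set (levels_from d t) \<Longrightarrow> d \<le> snd p"
  by (induction d t rule: levels_from.induct) (fastforce dest: Suc_leD)

lemma euler_levels_snoc: "\<exists>E. euler_levels d (Node a ts) = E @ [(a, d)]"
  by (cases ts rule: rev_cases) auto

lemma find_append:
  "find P (xs @ ys) = (case find P xs of None \<Rightarrow> find P ys | Some x \<Rightarrow> Some x)"
  by (induction xs) auto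

lemma find_concat_map_cong:
  "(\<And>x. x \<in> set xs \<Longrightarrow> find P (f x) = find Q (g x)) \<Longrightarrow>
   find P (concat (map f xs)) = find Q (concat (map g xs))"
  by (induction xs) (auto simp: find_append split: option.split)

text \<open>The Euler tour differs from the preorder listing only by returns to parents, which are
  shallower than L before the first vertex of level L is reached; and in preorder no vertex
  deeper than L can precede the first one of level L.\<close>
lemma find_level_levels_from_euler_levels:
  "d \<le> L \<Longrightarrow> find (\<lambda>p. snd p = L) (levels_from d t) = find (\<lambda>p. L \<le> snd p) (euler_levels d t)"
proof (induction d t rule: levels_from.induct)
  case (1 d a ts)
  show ?case
  proof (cases "d = L")
    case False
    with "1.prems" have "Suc d \<le> L" by simp
    then have "find (\<lambda>p. snd p = L) (concat (map (levels_from (Suc d)) ts)) =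
      find (\<lambda>p. L \<le> snd p) (concat (map (\<lambda>t. euler_levels (Suc d) t @ [(a, d)]) ts))"
      using "1.IH" \<open>d \<noteq> L\<close> "1.prems"
      by (intro find_concat_map_cong) (auto simp: find_append split: option.split)
    with False "1.prems" show ?thesis by simp
  qed simp
qed

lemma find_level_subtrees:
  "d < L \<Longrightarrow> find (\<lambda>p. snd p = L) (concat (map (levels_from (Suc d)) ts)) =
     find (\<lambda>p. L \<le> snd p) (concat (map (\<lambda>t. euler_levels (Suc d) t @ [(a, d)]) ts))"
  using find_level_levels_from_euler_levels[of d L "Node a ts"] by simp

lemma find_root_level_subtrees_eq_None:
  "find (\<lambda>p. snd p = d) (concat (map (levels_from (Suc d)) ts)) = None"
  by (fastforce simp: find_None_iff dest: levels_from_ge)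

lemma levels_from_euler_levels_split:
  assumes "distinct (preorder t)" and "v \<in> set (preorder t)"
  shows "\<exists>A B E1 E2 L. levels_from d t = A @ (v, L) # B \<and> euler_levels d t = E1 @ (v, L) # E2
           \<and> d \<le> L \<and> find (\<lambda>p. snd p = L) B = find (\<lambda>p. L \<le> snd p) E2 \<and> v \<notin> fst ` set E2"
  using assms
proof (induction d t rule: levels_from.induct)
  case (1 d a ts)
  show ?case
  proof (cases "v = a")
    case True
    obtain E where E: "euler_levels d (Node a ts) = E @ [(a, d)]"
      using euler_levels_snoc[of d a ts] by blast
    with True find_root_level_subtrees_eq_None show ?thesis
      by (intro exI[of _ "[]"] exI[of _ "concat (map (levels_from (Suc d)) ts)"] exI[of _ E]
          exI[of _ "[]"] exI[of _ d]) simp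
  next
    case False
    with "1.prems" obtain t where t: "t \<in> set ts" "v \<in> set (preorder t)" by auto
    then obtain xs ys where ts: "ts = xs @ t # ys" by (meson split_list)
    have "distinct (preorder t)" using "1.prems"(1) t(1) by (auto simp: distinct_concat_iff)
    then obtain A B E1 E2 L where
      lf: "levels_from (Suc d) t = A @ (v, L) # B" and
      el: "euler_levels (Suc d) t = E1 @ (v, L) # E2" and
      dL: "d < L" and
      fnd: "find (\<lambda>p. snd p = L) B = find (\<lambda>p. L \<le> snd p) E2" and
      vE2: "v \<notin> fst ` set E2"
      using "1.IH"[OF t(1) _ t(2)] by (metis Suc_le_eq)
    let ?C = "concat (map (levels_from (Suc d)) ys)"
    let ?C' = "concat (map (\<lambda>t. euler_levels (Suc d) t @ [(a, d)]) ys)"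
    have "set (preorder t) \<inter> (\<Union>s\<in>set ys. set (preorder s)) = {}"
      using "1.prems"(1) ts by (auto simp: distinct_concat_iff)
    moreover have "fst ` set ?C' \<subseteq> insert a (\<Union>s\<in>set ys. set (preorder s))"
      by (simp add: image_UN image_Un fst_set_euler_levels)
    ultimately have "v \<notin> fst ` set ?C'" using t(2) False by blast
    then have "v \<notin> fst ` set (E2 @ (a, d) # ?C')"
      using vE2 False unfolding set_append image_Un by simp
    moreover have "find (\<lambda>p. snd p = L) (B @ ?C) = find (\<lambda>p. L \<le> snd p) (E2 @ (a, d) # ?C')"
      using fnd find_level_subtrees[OF dL, of ys a] dL by (auto simp: find_append split: option.split)
    moreover have "levels_from d (Node a ts) =
        ((a, d) # concat (map (levels_from (Suc d)) xs) @ A) @ (v, L) # (B @ ?C)"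
      using lf ts by simp
    moreover have "euler_levels d (Node a ts) =
        ((a, d) # concat (map (\<lambda>t. euler_levels (Suc d) t @ [(a, d)]) xs) @ E1) @ (v, L) # (E2 @ (a, d) # ?C')"
      using el ts by simp
    ultimately show ?thesis
      using dL by (intro exI[of _ "_ @ _"] exI[of _ "B @ ?C"] exI[of _ "E2 @ (a, d) # ?C'"] exI[of _ L]) auto
  qed
qed

lemma level_of_mem_levels_from:
  assumes "distinct (preorder T)" and "p \<in> set (levels_from 0 T)"
  shows "level T (fst p) = snd p"
  unfolding level_def
proof (rule the_equality)
  show "(fst p, snd p) \<in> set (levels_from 0 T)" using assms(2) by simp
  fix l assume "(fst p, l) \<in> set (levels_from 0 T)"
  moreover have "inj_on fst (set (levels_from 0 T))"
    using assms(1) by (metis distinct_map map_fst_levels_from)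
  ultimately have "(fst p, l) = p" using assms(2) by (metis fst_conv inj_on_eq_iff)
  then show "l = snd p" by (metis snd_conv)
qed

lemma find_drop_Suc_eq_Some_iff:
  "find P (drop (Suc i) xs) = Some x \<longleftrightarrow>
   (\<exists>j. i < j \<and> j < length xs \<and> xs ! j = x \<and> P x \<and> (\<forall>k. i < k \<and> k < j \<longrightarrow> \<not> P (xs ! k)))"
proof
  assume "find P (drop (Suc i) xs) = Some x"
  then obtain j where "j < length xs - Suc i" "P x" "x = xs ! (Suc i + j)"
      "\<forall>k<j. \<not> P (xs ! (Suc i + k))"
    by (auto simp: find_Some_iff)
  then show "\<exists>j. i < j \<and> j < length xs \<and> xs ! j = x \<and> P x \<and> (\<forall>k. i < k \<and> k < j \<longrightarrow> \<not> P (xs ! k))"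
  proof (intro exI[of _ "Suc i + j"] conjI allI impI)
    fix k assume k: "i < k \<and> k < Suc i + j"
    then have "k - Suc i < j" by linarith
    then show "\<not> P (xs ! k)"
      using \<open>\<forall>k<j. \<not> P (xs ! (Suc i + k))\<close> k by (metis Suc_leI le_add_diff_inverse)
  qed simp_all
next
  assume "\<exists>j. i < j \<and> j < length xs \<and> xs ! j = x \<and> P x \<and> (\<forall>k. i < k \<and> k < j \<longrightarrow> \<not> P (xs ! k))"
  then obtain j where "i < j" "j < length xs" "xs ! j = x" "P x" "\<forall>k. i < k \<and> k < j \<longrightarrow> \<not> P (xs ! k)"
    by blast
  then show "find P (drop (Suc i) xs) = Some x"
    unfolding find_Some_iff
  proof (intro exI[of _ "j - Suc i"] conjI allI impI)
    fix k assume "k < j - Suc i"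
    then show "\<not> P (drop (Suc i) xs ! k)"
      using \<open>\<forall>k. i < k \<and> k < j \<longrightarrow> \<not> P (xs ! k)\<close>[rule_format, of "Suc i + k"] \<open>j < length xs\<close> by simp
  qed simp_all
qed

lemma find_map: "find P (map f xs) = map_option f (find (P \<circ> f) xs)"
  by (induction xs) auto

lemma find_map_fst_levels_from:
  assumes "distinct (preorder T)" and "set ys \<subseteq> set (levels_from 0 T)"
  shows "find (\<lambda>x. Q (level T x)) (map fst ys) = map_option fst (find (\<lambda>p. Q (snd p)) ys)"
proof -
  have "level T (fst p) = snd p" if "p \<in> set ys" for p
    using assms level_of_mem_levels_from that by blast
  then have "find (\<lambda>p. Q (level T (fst p))) ys = find (\<lambda>p. Q (snd p)) ys"
    by (intro find_cong) simp_all
  then show ?thesis by (simp add: find_map comp_def)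
qed

lemma level_successor_iff_find:
  assumes dist: "distinct (preorder T)" and split: "preorder T = xs @ v # ys"
  shows "level_successor T v u \<longleftrightarrow> find (\<lambda>x. level T x = level T v) ys = Some u"
proof -
  let ?P = "preorder T" and ?i = "length xs"
  have at: "?i < length ?P" "?P ! ?i = v" "ys = drop (Suc ?i) ?P" using split by simp_all
  have idx: "i = ?i" if "i < length ?P" "?P ! i = v" for i
    using nth_eq_iff_index_eq[OF dist that(1) at(1)] that(2) at(2) by simp
  have "level_successor T v u \<longleftrightarrow> (\<exists>j. ?i < j \<and> j < length ?P \<and> ?P ! j = u \<and> level T u = level T v
          \<and> (\<forall>k. ?i < k \<and> k < j \<longrightarrow> level T (?P ! k) \<noteq> level T v))"
    unfolding level_successor_def Let_def
  proof
    assume "\<exists>i j. i < j \<and> j < length ?P \<and> ?P ! i = v \<and> ?P ! j = u \<and> level T u = level T v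
          \<and> (\<forall>k. i < k \<and> k < j \<longrightarrow> level T (?P ! k) \<noteq> level T v)"
    then obtain i j where "i < j" "j < length ?P" "?P ! i = v" "?P ! j = u" "level T u = level T v"
        "\<forall>k. i < k \<and> k < j \<longrightarrow> level T (?P ! k) \<noteq> level T v"
      by blast
    moreover from this have "i = ?i" using idx by simp
    ultimately show "\<exists>j. ?i < j \<and> j < length ?P \<and> ?P ! j = u \<and> level T u = level T v
          \<and> (\<forall>k. ?i < k \<and> k < j \<longrightarrow> level T (?P ! k) \<noteq> level T v)" by blast
  qed (use at in blast)
  then show ?thesis unfolding at(3) find_drop_Suc_eq_Some_iff by simp
qed

lemma last_occ_eq_length:
  assumes "euler_tour T = xs @ v # ys" and "v \<notin> set ys"
  shows "last_occ T v = length xs"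
  unfolding last_occ_def assms(1)
proof (rule Max_eqI)
  fix i assume i: "i \<in> {i. i < length (xs @ v # ys) \<and> (xs @ v # ys) ! i = v}"
  show "i \<le> length xs"
  proof (rule ccontr)
    assume "\<not> i \<le> length xs"
    then have "(xs @ v # ys) ! i = ys ! (i - Suc (length xs))" "i - Suc (length xs) < length ys"
      using i by (auto simp: nth_append nth_Cons')
    then show False using i assms(2) nth_mem by fastforce
  qed
qed simp_all

lemma first_after_last_occ_iff_find:
  assumes split: "euler_tour T = xs @ v # ys" and "v \<notin> set ys"
  shows "first_after_last_occ T v u \<longleftrightarrow> find (\<lambda>x. level T v \<le> level T x) ys = Some u"
proof -
  have ys: "ys = drop (Suc (length xs)) (euler_tour T)" using split by simp
  show ?thesis
    unfolding first_after_last_occ_def Let_def last_occ_eq_length[OF assms] ys find_drop_Suc_eq_Some_iff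
    by (simp add: not_le)
qed

theorem mainTheorem6:
  fixes T :: "'a rtree" and u v :: 'a
  assumes "distinct (preorder T)"
    and "v \<in> set (preorder T)"
  shows "level_successor T v u \<longleftrightarrow> first_after_last_occ T v u"
proof -
  obtain A B E1 E2 L where
    lf: "levels_from 0 T = A @ (v, L) # B" and el: "euler_levels 0 T = E1 @ (v, L) # E2" and
    fnd: "find (\<lambda>p. snd p = L) B = find (\<lambda>p. L \<le> snd p) E2" and v: "v \<notin> fst ` set E2"
    using levels_from_euler_levels_split[OF assms, of 0] by blast
  have L: "level T v = L" using level_of_mem_levels_from[OF assms(1), of "(v, L)"] lf by simp
  have P: "preorder T = map fst A @ v # map fst B"
    using arg_cong[OF lf, of "map fst"] by (simp add: map_fst_levels_from)
  have E: "euler_tour T = map fst E1 @ v # map fst E2"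
    using arg_cong[OF el, of "map fst"] by (simp add: map_fst_euler_levels)
  have "set B \<subseteq> set (levels_from 0 T)" "set E2 \<subseteq> set (levels_from 0 T)"
    using lf el set_euler_levels_subset[of 0 T] by auto
  then have "find (\<lambda>x. level T x = L) (map fst B) = find (\<lambda>x. L \<le> level T x) (map fst E2)"
    using find_map_fst_levels_from[OF assms(1), of _ "\<lambda>l. l = L"]
      find_map_fst_levels_from[OF assms(1), of _ "\<lambda>l. L \<le> l"] fnd by simp
  then show ?thesis
    using level_successor_iff_find[OF assms(1) P] first_after_last_occ_iff_find[OF E] v L by simp
qed

end
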